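(* Let $c<\delta_1$. There exists $\Delta_1=\Delta_1(c,\delta_1)>0$ such that for every $A\ge1$ there is $\tilde c_2=\tilde c_2(A)>0$ such that, for all $N$ large enough, $$\mathbb P_{L-z}\Big(\inf_{0\le t\le\epsilon}\zeta_t\le1\Big)\le\tilde c_2N^{-\Delta_1}\qquad\text{for all }z\in[0,cL].$$
   Context: Let $W:[0,\infty)\to\mathbb R$ be non-negative, $C^1$, supported in $[0,1]$. For $L>1$ let $\lambda_1=\lambda_1(L)$ be the largest eigenvalue of $\frac12v''+\frac12Wv=\lambda v$ on $(0,L)$, $v(0)=v(L)=0$, with eigenfunction $v_1>0$ on $(0,L)$; $\lambda_1(L)$ increases to $\lambda_{1,\infty}>0$ (assumed). Set $\beta=\sqrt{2\lambda_{1,\infty}}$, $\mu=\sqrt{1+2\lambda_{1,\infty}}$, assume $\mu>3\beta$. For $N\ge1,A\ge1$ let $L=L_{(N,A)}=\frac1{2\beta}\log N+\frac1{\mu-\beta}\log A$. The spine process $\zeta$ on $(0,L)$ solves $d\zeta_t=\frac{v_1'(\zeta_t)}{v_1(\zeta_t)}dt+dB_t$, $B$ standard Brownian motion; $\mathbb P_y$ is its law from $\zeta_0=y$. Fix $\delta_1,\delta_2>0$ with $\frac{1-\delta_1}{\beta}=\frac{2(1+\delta_2)}{\mu-\beta}$ and $\epsilon=\frac{1-\delta_1}{\beta}L$. *)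

theory Defs
  imports "HOL-Probability.Probability"
begin

definition admissible_W :: "(real \<Rightarrow> real) \<Rightarrow> bool" where
  "admissible_W W \<longleftrightarrow>
     (\<forall>x\<ge>0. W x \<ge> 0) \<and> (\<forall>x>1. W x = 0) \<and>
     (\<exists>W'. (\<forall>x\<ge>0. (W has_real_derivative W' x) (at x within {0..})) \<and> continuous_on {0..} W')"

definition dirichlet_eigen :: "(real \<Rightarrow> real) \<Rightarrow> real \<Rightarrow> real \<Rightarrow> (real \<Rightarrow> real) \<Rightarrow> bool" where
  "dirichlet_eigen W L lam v \<longleftrightarrow>
     continuous_on {0..L} v \<and> v 0 = 0 \<and> v L = 0 \<and>
     (\<exists>x\<in>{0<..<L}. v x \<noteq> 0) \<and>
     (\<forall>x\<in>{0<..<L}. v differentiable (at x) \<and> deriv v differentiable (at x) \<and>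
        (1/2) * deriv (deriv v) x + (1/2) * W x * v x = lam * v x)"

definition std_BM :: "'a measure \<Rightarrow> (real \<Rightarrow> 'a \<Rightarrow> real) \<Rightarrow> bool" where
  "std_BM M B \<longleftrightarrow>
     prob_space M \<and>
     (\<forall>t\<ge>0. B t \<in> borel_measurable M) \<and>
     (\<forall>\<omega>\<in>space M. B 0 \<omega> = 0 \<and> continuous_on {0..} (\<lambda>t. B t \<omega>)) \<and>
     (\<forall>s t. 0 \<le> s \<and> s < t \<longrightarrow>
        distributed M lborel (\<lambda>\<omega>. B t \<omega> - B s \<omega>) (\<lambda>x. ennreal (normal_density 0 (sqrt (t - s)) x))) \<and>
     (\<forall>(ts :: nat \<Rightarrow> real) n. 0 \<le> ts 0 \<and> (\<forall>i<n. ts i < ts (Suc i)) \<longrightarrow>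
        prob_space.indep_vars M (\<lambda>_. borel) (\<lambda>i \<omega>. B (ts (Suc i)) \<omega> - B (ts i) \<omega>) {..<n})"

text \<open>zeta is a solution on (0,L) of d zeta = b(zeta) dt + dB started at y, i.e. (additive noise)
  zeta_t = y + int_0^t b(zeta_s) ds + B_t, with continuous paths in (0,L).\<close>
definition diffusion_solution ::
  "'a measure \<Rightarrow> (real \<Rightarrow> 'a \<Rightarrow> real) \<Rightarrow> (real \<Rightarrow> real) \<Rightarrow> real \<Rightarrow> real \<Rightarrow> (real \<Rightarrow> 'a \<Rightarrow> real) \<Rightarrow> bool" where
  "diffusion_solution M B b L y \<zeta> \<longleftrightarrow>
     std_BM M B \<and>
     (\<forall>t\<ge>0. \<zeta> t \<in> borel_measurable M) \<and>
     (\<forall>\<omega>\<in>space M. continuous_on {0..} (\<lambda>t. \<zeta> t \<omega>) \<and>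
        (\<forall>t\<ge>0. \<zeta> t \<omega> \<in> {0<..<L} \<and>
           (\<lambda>s. b (\<zeta> s \<omega>)) integrable_on {0..t} \<and>
           \<zeta> t \<omega> = y + integral {0..t} (\<lambda>s. b (\<zeta> s \<omega>)) + B t \<omega>))"

end

theory Submission
  imports Defs "HOL-Real_Asymp.Real_Asymp"
begin

text \<open>Since \<open>W\<close> vanishes beyond \<open>1\<close>, the eigenfunction solves \<open>v'' = 2 \<lambda> v\<close> on \<open>(1, L)\<close>; comparing
  it with \<open>sinh (\<beta> (L - y))\<close> (or using concavity when \<open>\<lambda> \<le> 0\<close>) bounds the drift \<open>v'/v\<close> of the
  spine below by \<open>-\<beta> \<theta>\<close>, for any fixed \<open>\<theta> > 1\<close>, away from \<open>L\<close>. Started at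
  \<open>L - z \<ge> (1 - c) L\<close>, the spine can reach \<open>1\<close> before time \<open>\<epsilon> = (1 - \<delta>1) L / \<beta>\<close> only if the
  driving Brownian motion drops by about \<open>((1 - c) - (1 - \<delta>1) \<theta>) L\<close>, a fixed fraction of \<open>L\<close> since
  \<open>c < \<delta>1\<close>. Gaussian bounds for the running maximum of Brownian motion (Levy's maximal
  inequality on dyadic grids) make this exponentially unlikely in \<open>L\<close>, hence polynomially
  small in \<open>N\<close> because \<open>L \<ge> log N / (2 \<beta>)\<close>.\<close>

section \<open>Gaussian tails and a maximal inequality\<close>

lemma normal_density_mult_exp:
  fixes s a y :: real
  assumes "s > 0"
  shows "normal_density 0 s y * exp (a * y) = exp (a\<^sup>2 * s\<^sup>2 / 2) * normal_density (a * s\<^sup>2) s y"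
proof -
  have "- ((y - 0)\<^sup>2) / (2 * s\<^sup>2) + a * y = a\<^sup>2 * s\<^sup>2 / 2 + - ((y - a * s\<^sup>2)\<^sup>2) / (2 * s\<^sup>2)"
    using assms by (simp add: field_simps power2_eq_square)
  then show ?thesis
    unfolding normal_density_def by (simp add: exp_add[symmetric] ac_simps)
qed

lemma nn_integral_normal_density_exp:
  fixes s a :: real
  assumes "s > 0"
  shows "(\<integral>\<^sup>+ y. ennreal (normal_density 0 s y) * ennreal (exp (a * y)) \<partial>lborel) = ennreal (exp (a\<^sup>2 * s\<^sup>2 / 2))"
proof -
  have "(\<integral>\<^sup>+ y. ennreal (normal_density 0 s y) * ennreal (exp (a * y)) \<partial>lborel)
      = (\<integral>\<^sup>+ y. ennreal (exp (a\<^sup>2 * s\<^sup>2 / 2)) * ennreal (normal_density (a * s\<^sup>2) s y) \<partial>lborel)"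
    by (intro nn_integral_cong) (simp add: normal_density_mult_exp[OF assms] ennreal_mult[symmetric])
  also have "\<dots> = ennreal (exp (a\<^sup>2 * s\<^sup>2 / 2)) * (\<integral>\<^sup>+ y. ennreal (normal_density (a * s\<^sup>2) s y) \<partial>lborel)"
    by (rule nn_integral_cmult) simp
  also have "(\<integral>\<^sup>+ y. ennreal (normal_density (a * s\<^sup>2) s y) \<partial>lborel) = 1"
    using assms by (subst nn_integral_eq_integral) auto
  finally show ?thesis by simp
qed

lemma normal_tail_le:
  fixes X :: "'a \<Rightarrow> real" and s x \<sigma> :: real
  assumes "prob_space M" and X: "distributed M lborel X (\<lambda>x. ennreal (normal_density 0 s x))"
    and s: "s > 0" and x: "x \<ge> 0" and \<sigma>: "\<bar>\<sigma>\<bar> = 1"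
  shows "measure M {\<omega>\<in>space M. x \<le> \<sigma> * X \<omega>} \<le> exp (- x\<^sup>2 / (2 * s\<^sup>2))"
proof -
  interpret prob_space M by fact
  \<comment> \<open>Chernoff bound with the optimal exponent \<open>x / s\<^sup>2\<close>\<close>
  define a where "a = \<sigma> * x / s\<^sup>2"
  have Xm: "X \<in> borel_measurable M"
    using distributed_measurable[OF X] by simp
  have ind_le: "indicator {\<omega>\<in>space M. x \<le> \<sigma> * X \<omega>} \<omega>
      \<le> ennreal (exp (- (x / s\<^sup>2) * x)) * ennreal (exp (a * X \<omega>))" for \<omega>
  proof (cases "\<omega> \<in> space M \<and> x \<le> \<sigma> * X \<omega>")
    case True
    have "(x / s\<^sup>2) * x \<le> (x / s\<^sup>2) * (\<sigma> * X \<omega>)"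
      using True x by (intro mult_left_mono) auto
    then have "1 \<le> exp (- (x / s\<^sup>2) * x) * exp (a * X \<omega>)"
      by (simp add: a_def exp_add[symmetric] field_simps)
    then show ?thesis
      using True by (simp add: ennreal_mult[symmetric])
  qed auto
  have S: "{\<omega>\<in>space M. x \<le> \<sigma> * X \<omega>} \<in> sets M"
    using Xm by measurable
  have "emeasure M {\<omega>\<in>space M. x \<le> \<sigma> * X \<omega>}
      \<le> (\<integral>\<^sup>+ \<omega>. ennreal (exp (- (x / s\<^sup>2) * x)) * ennreal (exp (a * X \<omega>)) \<partial>M)"
    using S ind_le by (simp only: nn_integral_indicator[symmetric]) (rule nn_integral_mono)
  also have "\<dots> = ennreal (exp (- (x / s\<^sup>2) * x)) * (\<integral>\<^sup>+ y. ennreal (exp (a * y)) \<partial>distr M lborel X)"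
    using Xm by (subst nn_integral_cmult) (auto simp: nn_integral_distr)
  also have "(\<integral>\<^sup>+ y. ennreal (exp (a * y)) \<partial>distr M lborel X) = ennreal (exp (a\<^sup>2 * s\<^sup>2 / 2))"
    using distributed_distr_eq_density[OF X]
    by (simp add: nn_integral_density nn_integral_normal_density_exp[OF s])
  also have "ennreal (exp (- (x / s\<^sup>2) * x)) * ennreal (exp (a\<^sup>2 * s\<^sup>2 / 2)) = ennreal (exp (- x\<^sup>2 / (2 * s\<^sup>2)))"
  proof -
    have "\<sigma>\<^sup>2 = 1"
      using \<sigma> power2_abs[of \<sigma>] by simp
    then have "a\<^sup>2 = (x / s\<^sup>2)\<^sup>2"
      by (simp add: a_def power_mult_distrib power_divide)
    then have "- (x / s\<^sup>2) * x + a\<^sup>2 * s\<^sup>2 / 2 = - x\<^sup>2 / (2 * s\<^sup>2)"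
      using s by (simp add: field_simps power2_eq_square)
    then show ?thesis
      by (simp add: ennreal_mult[symmetric] exp_add[symmetric])
  qed
  finally show ?thesis
    using Xm by (simp add: emeasure_eq_measure)
qed

definition first_passage :: "real \<Rightarrow> (nat \<Rightarrow> real) \<Rightarrow> nat \<Rightarrow> bool" where
  "first_passage x d k \<longleftrightarrow> x \<le> (\<Sum>i<k. d i) \<and> (\<forall>j<k. (\<Sum>i<j. d i) < x)"

lemma first_passage_unique: "first_passage x d k \<Longrightarrow> first_passage x d l \<Longrightarrow> k = l"
  unfolding first_passage_def by (meson linorder_neqE_nat not_le)

lemma ex_first_passage:
  assumes "x \<le> (\<Sum>i<j. d i)"
  shows "\<exists>k\<le>j. first_passage x d k"
proof -
  obtain k where "x \<le> (\<Sum>i<k. d i)" "\<And>l. l < k \<Longrightarrow> \<not> x \<le> (\<Sum>i<l. d i)"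
    using assms exists_least_iff[of "\<lambda>k. x \<le> (\<Sum>i<k. d i)"] by blast
  then show ?thesis
    using assms unfolding first_passage_def by (metis not_le_imp_less)
qed

lemma first_passage_restrict: "first_passage x (restrict d {..<k}) k = first_passage x d k"
  unfolding first_passage_def by simp

lemma sets_first_passage:
  "{d\<in>space (\<Pi>\<^sub>M i\<in>{..<k}. borel). first_passage x d k} \<in> sets (\<Pi>\<^sub>M i\<in>{..<k}. borel)"
proof -
  have "(\<lambda>d. \<Sum>i<j. d i :: real) \<in> borel_measurable (\<Pi>\<^sub>M i\<in>{..<k}. borel)" if "j \<le> k" for j
    using that by (intro borel_measurable_sum measurable_component_singleton) auto
  then show ?thesis
    unfolding first_passage_def
    by (intro sets.sets_Collect_conj sets.sets_Collect_finite_All') (auto simp del: lessThan_iff)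
qed

lemma (in prob_space) indep_vars_prefix_suffix:
  fixes D :: "nat \<Rightarrow> 'a \<Rightarrow> real"
  assumes ind: "indep_vars (\<lambda>_. borel) D {..<n}" and "k \<le> n"
    and P: "P \<in> sets (\<Pi>\<^sub>M i\<in>{..<k}. borel)" and Q: "Q \<in> sets (\<Pi>\<^sub>M i\<in>{k..<n}. borel)"
  shows "prob {\<omega>\<in>space M. (\<lambda>i\<in>{..<k}. D i \<omega>) \<in> P \<and> (\<lambda>i\<in>{k..<n}. D i \<omega>) \<in> Q}
       = prob {\<omega>\<in>space M. (\<lambda>i\<in>{..<k}. D i \<omega>) \<in> P} * prob {\<omega>\<in>space M. (\<lambda>i\<in>{k..<n}. D i \<omega>) \<in> Q}"
proof -
  have "indep_var (\<Pi>\<^sub>M i\<in>{..<k}. borel) (\<lambda>\<omega>. \<lambda>i\<in>{..<k}. D i \<omega>)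
      (\<Pi>\<^sub>M i\<in>{k..<n}. borel) (\<lambda>\<omega>. \<lambda>i\<in>{k..<n}. D i \<omega>)"
    using \<open>k \<le> n\<close> by (intro indep_var_restrict[OF ind]) auto
  from indep_varD[OF this P Q] show ?thesis
    by (simp add: vimage_def Int_def conj_commute)
qed

lemma (in prob_space) events_first_passage:
  fixes D :: "nat \<Rightarrow> 'a \<Rightarrow> real"
  assumes "\<And>i. i < k \<Longrightarrow> D i \<in> borel_measurable M"
  shows "{\<omega>\<in>space M. first_passage x (\<lambda>i. D i \<omega>) k} \<in> events"
proof -
  have "{\<omega>\<in>space M. first_passage x (\<lambda>i. D i \<omega>) k}
      = {\<omega>\<in>space M. (\<lambda>i\<in>{..<k}. D i \<omega>) \<in> {d\<in>space (\<Pi>\<^sub>M i\<in>{..<k}. borel). first_passage x d k}}"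
    by (auto simp: space_PiM first_passage_restrict)
  also have "\<dots> \<in> events"
    using sets_first_passage by measurable (auto intro: assms)
  finally show ?thesis .
qed

text \<open>Splitting at the first passage time \<open>k\<close>, the first \<open>k\<close> increments decide the passage
  and are independent of the remaining ones.\<close>
lemma (in prob_space) prob_first_passage_le:
  fixes D :: "nat \<Rightarrow> 'a \<Rightarrow> real"
  assumes ind: "indep_vars (\<lambda>_. borel) D {..<n}" and "y \<ge> 0" and "k \<le> n"
    and half: "k < n \<Longrightarrow> 1/2 \<le> prob {\<omega>\<in>space M. -y \<le> (\<Sum>i\<in>{k..<n}. D i \<omega>)}"
  shows "prob {\<omega>\<in>space M. first_passage x (\<lambda>i. D i \<omega>) k}
      \<le> 2 * prob {\<omega>\<in>space M. first_passage x (\<lambda>i. D i \<omega>) k \<and> -y \<le> (\<Sum>i\<in>{k..<n}. D i \<omega>)}"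
proof (cases "k = n")
  case True
  then show ?thesis
    using \<open>y \<ge> 0\<close> by (simp add: measure_nonneg)
next
  case False
  define Q where "Q = {d\<in>space (\<Pi>\<^sub>M i\<in>{k..<n}. borel). -y \<le> (\<Sum>i\<in>{k..<n}. d i :: real)}"
  have Q: "Q \<in> sets (\<Pi>\<^sub>M i\<in>{k..<n}. borel)"
  proof -
    have "(\<lambda>d. \<Sum>i\<in>{k..<n}. d i :: real) \<in> borel_measurable (\<Pi>\<^sub>M i\<in>{k..<n}. borel)"
      by (intro borel_measurable_sum measurable_component_singleton) auto
    then show ?thesis
      unfolding Q_def by measurable
  qed
  have "prob {\<omega>\<in>space M. first_passage x (\<lambda>i. D i \<omega>) k \<and> -y \<le> (\<Sum>i\<in>{k..<n}. D i \<omega>)}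
      = prob {\<omega>\<in>space M. first_passage x (\<lambda>i. D i \<omega>) k} * prob {\<omega>\<in>space M. -y \<le> (\<Sum>i\<in>{k..<n}. D i \<omega>)}"
    (is "_ = ?pA * ?pC")
    using indep_vars_prefix_suffix[OF ind \<open>k \<le> n\<close> sets_first_passage Q]
    by (simp add: Q_def space_PiM first_passage_restrict)
  moreover have "?pA * 1 \<le> ?pA * (2 * ?pC)"
    using half False \<open>k \<le> n\<close> by (intro mult_left_mono) auto
  ultimately show ?thesis
    by (simp add: ac_simps)
qed

lemma (in prob_space) levy_maximal_inequality:
  fixes D :: "nat \<Rightarrow> 'a \<Rightarrow> real"
  assumes ind: "indep_vars (\<lambda>_. borel) D {..<n}" and "y \<ge> 0"
    and half: "\<And>k. k < n \<Longrightarrow> 1/2 \<le> prob {\<omega>\<in>space M. -y \<le> (\<Sum>i\<in>{k..<n}. D i \<omega>)}"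
  shows "prob {\<omega>\<in>space M. \<exists>j\<le>n. x \<le> (\<Sum>i<j. D i \<omega>)}
      \<le> 2 * prob {\<omega>\<in>space M. x - y \<le> (\<Sum>i<n. D i \<omega>)}"
proof -
  have Dm: "D i \<in> borel_measurable M" if "i < n" for i
    using ind that unfolding indep_vars_def by auto
  define A where "A k = {\<omega>\<in>space M. first_passage x (\<lambda>i. D i \<omega>) k}" for k
  define C where "C k = {\<omega>\<in>space M. -y \<le> (\<Sum>i\<in>{k..<n}. D i \<omega>)}" for k
  have Am: "A k \<in> events" if "k \<le> n" for k
    unfolding A_def using that by (intro events_first_passage Dm) auto
  have Cm: "C k \<in> events" for k
    unfolding C_def using Dm by measurable
  have disj: "disjoint_family_on A {..n}"
    unfolding disjoint_family_on_def A_def using first_passage_unique by blast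
  then have disjC: "disjoint_family_on (\<lambda>k. A k \<inter> C k) {..n}"
    unfolding disjoint_family_on_def by blast
  have "{\<omega>\<in>space M. \<exists>j\<le>n. x \<le> (\<Sum>i<j. D i \<omega>)} = (\<Union>k\<in>{..n}. A k)"
    unfolding A_def using ex_first_passage by (fastforce simp: first_passage_def)
  moreover have "prob (\<Union>k\<in>{..n}. A k) = (\<Sum>k\<le>n. prob (A k))"
    using Am disj by (intro finite_measure_finite_Union) auto
  ultimately have "prob {\<omega>\<in>space M. \<exists>j\<le>n. x \<le> (\<Sum>i<j. D i \<omega>)} = (\<Sum>k\<le>n. prob (A k))"
    by simp
  also have "\<dots> \<le> (\<Sum>k\<le>n. 2 * prob (A k \<inter> C k))"
  proof (rule sum_mono)
    fix k assume "k \<in> {..n}"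
    moreover have "A k \<inter> C k
        = {\<omega>\<in>space M. first_passage x (\<lambda>i. D i \<omega>) k \<and> -y \<le> (\<Sum>i\<in>{k..<n}. D i \<omega>)}"
      by (auto simp: A_def C_def)
    ultimately show "prob (A k) \<le> 2 * prob (A k \<inter> C k)"
      using prob_first_passage_le[OF ind \<open>y \<ge> 0\<close> _ half] by (simp add: A_def)
  qed
  also have "\<dots> = 2 * prob (\<Union>k\<in>{..n}. A k \<inter> C k)"
    using Am Cm disjC by (subst finite_measure_finite_Union) (auto simp: sum_distrib_left)
  also have "\<dots> \<le> 2 * prob {\<omega>\<in>space M. x - y \<le> (\<Sum>i<n. D i \<omega>)}"
  proof -
    have "(\<Sum>i<n. D i \<omega>) = (\<Sum>i<k. D i \<omega>) + (\<Sum>i\<in>{k..<n}. D i \<omega>)" if "k \<le> n" for k \<omega>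
      using that by (simp add: lessThan_atLeast0 sum.atLeastLessThan_concat)
    then have "(\<Union>k\<in>{..n}. A k \<inter> C k) \<subseteq> {\<omega>\<in>space M. x - y \<le> (\<Sum>i<n. D i \<omega>)}"
      by (fastforce simp: A_def C_def first_passage_def)
    moreover have "{\<omega>\<in>space M. x - y \<le> (\<Sum>i<n. D i \<omega>)} \<in> events"
      using Dm by measurable
    ultimately show ?thesis
      by (simp add: finite_measure_mono)
  qed
  finally show ?thesis .
qed

section \<open>Suprema of Brownian motion\<close>

lemma std_BM_prob_space: "std_BM M B \<Longrightarrow> prob_space M"
  unfolding std_BM_def by blast

lemma std_BM_measurable: "std_BM M B \<Longrightarrow> 0 \<le> t \<Longrightarrow> B t \<in> borel_measurable M"
  unfolding std_BM_def by blast

lemma std_BM_zero: "std_BM M B \<Longrightarrow> \<omega> \<in> space M \<Longrightarrow> B 0 \<omega> = 0"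
  unfolding std_BM_def by blast

lemma std_BM_continuous: "std_BM M B \<Longrightarrow> \<omega> \<in> space M \<Longrightarrow> continuous_on {0..} (\<lambda>t. B t \<omega>)"
  unfolding std_BM_def by blast

lemma std_BM_increment_distributed:
  "std_BM M B \<Longrightarrow> 0 \<le> s \<Longrightarrow> s < t \<Longrightarrow>
    distributed M lborel (\<lambda>\<omega>. B t \<omega> - B s \<omega>) (\<lambda>x. ennreal (normal_density 0 (sqrt (t - s)) x))"
  unfolding std_BM_def by blast

lemma std_BM_increments_indep:
  "std_BM M B \<Longrightarrow> 0 \<le> ts 0 \<Longrightarrow> (\<And>i. i < n \<Longrightarrow> ts i < ts (Suc i)) \<Longrightarrow>
    prob_space.indep_vars M (\<lambda>_. borel) (\<lambda>i \<omega>. B (ts (Suc i)) \<omega> - B (ts i) \<omega>) {..<n}"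
  unfolding std_BM_def by blast

lemma std_BM_increment_tail:
  assumes BM: "std_BM M B" and "0 \<le> s" "s < t" and "\<bar>\<sigma>\<bar> = 1" "x \<ge> 0"
  shows "measure M {\<omega>\<in>space M. x \<le> \<sigma> * (B t \<omega> - B s \<omega>)} \<le> exp (- x\<^sup>2 / (2 * (t - s)))"
  using normal_tail_le[OF std_BM_prob_space[OF BM] std_BM_increment_distributed[OF BM], of s t] assms
  by simp

lemma std_BM_increment_ge_half:
  assumes BM: "std_BM M B" and "0 \<le> s" "s < T" and \<sigma>: "\<bar>\<sigma>\<bar> = 1"
  shows "1/2 \<le> measure M {\<omega>\<in>space M. - sqrt (2 * T) \<le> \<sigma> * (B T \<omega> - B s \<omega>)}"
proof -
  interpret prob_space M
    using BM by (rule std_BM_prob_space)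
  have Bm: "B T \<in> borel_measurable M" "B s \<in> borel_measurable M"
    using assms by (auto intro: std_BM_measurable[OF BM])
  have "space M - {\<omega>\<in>space M. - sqrt (2 * T) \<le> \<sigma> * (B T \<omega> - B s \<omega>)}
      \<subseteq> {\<omega>\<in>space M. sqrt (2 * T) \<le> - \<sigma> * (B T \<omega> - B s \<omega>)}"
    by auto
  then have "prob (space M - {\<omega>\<in>space M. - sqrt (2 * T) \<le> \<sigma> * (B T \<omega> - B s \<omega>)})
      \<le> prob {\<omega>\<in>space M. sqrt (2 * T) \<le> - \<sigma> * (B T \<omega> - B s \<omega>)}"
    using Bm by (intro finite_measure_mono) measurable
  also have "\<dots> \<le> exp (- (sqrt (2 * T))\<^sup>2 / (2 * (T - s)))"
    using assms by (intro std_BM_increment_tail) auto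
  also have "\<dots> \<le> exp (-1)"
    using assms by (simp add: field_simps)
  also have "\<dots> \<le> 1/2"
    using exp_ge_add_one_self[of 1] by (simp add: exp_minus field_simps)
  finally have "prob (space M - {\<omega>\<in>space M. - sqrt (2 * T) \<le> \<sigma> * (B T \<omega> - B s \<omega>)}) \<le> 1/2" .
  then show ?thesis
    using Bm by (subst (asm) prob_compl) auto
qed

lemma std_BM_grid_max_tail:
  assumes BM: "std_BM M B" and T: "T > 0" and \<sigma>: "\<bar>\<sigma>\<bar> = 1"
    and x: "sqrt (2 * T) \<le> x" and n: "n > 0"
  shows "measure M {\<omega>\<in>space M. \<exists>j\<le>n. x \<le> \<sigma> * B (real j * T / real n) \<omega>}
      \<le> 2 * exp (- (x - sqrt (2 * T))\<^sup>2 / (2 * T))"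
proof -
  interpret prob_space M
    using BM by (rule std_BM_prob_space)
  define ts where "ts i = real i * T / real n" for i
  have ts_less: "ts i < ts j" if "i < j" for i j
    using that T n by (simp add: ts_def divide_strict_right_mono)
  have ts_0: "ts 0 = 0" and ts_n: "ts n = T"
    using n by (simp_all add: ts_def)
  define D where "D i \<omega> = \<sigma> * (B (ts (Suc i)) \<omega> - B (ts i) \<omega>)" for i \<omega>
  have ind: "indep_vars (\<lambda>_. borel) D {..<n}"
    unfolding D_def[abs_def] using ts_less ts_0
    by (intro indep_vars_compose2[OF std_BM_increments_indep[OF BM], where Y="\<lambda>_ z. \<sigma> * z"]) auto
  have partial_sum: "(\<Sum>i<j. D i \<omega>) = \<sigma> * B (ts j) \<omega>" if "\<omega> \<in> space M" for j \<omega>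
    using std_BM_zero[OF BM that] ts_0
    by (simp add: D_def sum_distrib_left[symmetric] sum_lessThan_telescope[of "\<lambda>i. B (ts i) \<omega>"])
  have half: "1/2 \<le> prob {\<omega>\<in>space M. - sqrt (2 * T) \<le> (\<Sum>i\<in>{k..<n}. D i \<omega>)}" if "k < n" for k
  proof -
    have "(\<Sum>i\<in>{k..<n}. D i \<omega>) = \<sigma> * (B T \<omega> - B (ts k) \<omega>)" if "\<omega> \<in> space M" for \<omega>
      using sum.atLeastLessThan_concat[of 0 k n "\<lambda>i. D i \<omega>"] \<open>k < n\<close> partial_sum[OF that] ts_n
      by (simp add: lessThan_atLeast0 algebra_simps)
    moreover have "0 \<le> ts k" "ts k < T"
      using ts_less[OF \<open>k < n\<close>] ts_less[of 0 k] ts_0 ts_n by (auto simp: le_less)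
    ultimately show ?thesis
      using std_BM_increment_ge_half[OF BM _ _ \<sigma>, of "ts k" T] by (simp cong: conj_cong)
  qed
  have "prob {\<omega>\<in>space M. \<exists>j\<le>n. x \<le> \<sigma> * B (real j * T / real n) \<omega>}
      = prob {\<omega>\<in>space M. \<exists>j\<le>n. x \<le> (\<Sum>i<j. D i \<omega>)}"
    using partial_sum by (simp add: ts_def cong: conj_cong)
  also have "\<dots> \<le> 2 * prob {\<omega>\<in>space M. x - sqrt (2 * T) \<le> (\<Sum>i<n. D i \<omega>)}"
    using half T by (intro levy_maximal_inequality[OF ind]) auto
  also have "{\<omega>\<in>space M. x - sqrt (2 * T) \<le> (\<Sum>i<n. D i \<omega>)}
      = {\<omega>\<in>space M. x - sqrt (2 * T) \<le> \<sigma> * (B T \<omega> - B 0 \<omega>)}"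
    using partial_sum std_BM_zero[OF BM] ts_n by auto
  also have "prob \<dots> \<le> exp (- (x - sqrt (2 * T))\<^sup>2 / (2 * (T - 0)))"
    using x T \<sigma> by (intro std_BM_increment_tail[OF BM]) auto
  finally show ?thesis
    by simp
qed

lemma continuous_on_dyadic_grid_approx:
  fixes f :: "real \<Rightarrow> 'b::metric_space"
  assumes f: "continuous_on {0..} f" and T: "T > 0" and t: "t \<in> {0..T}" and e: "e > 0"
  shows "\<exists>m. \<exists>j\<le>2^m. dist (f (real j * T / 2^m)) (f t) < e"
proof -
  obtain d where d: "d > 0" and dd: "\<And>s. s \<in> {0..} \<Longrightarrow> dist s t < d \<Longrightarrow> dist (f s) (f t) < e"
    using f t e unfolding continuous_on_iff by (metis atLeastAtMost_iff atLeast_iff)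
  obtain m where m: "T / d < 2^m"
    using real_arch_pow[of 2 "T / d"] by auto
  define p :: real where "p = 2^m"
  have p: "p > 0" "T / p < d"
    using m d by (simp_all add: p_def field_simps)
  define j where "j = nat \<lfloor>t * p / T\<rfloor>"
  have j: "real j \<le> t * p / T" "t * p / T < real j + 1"
    using t T p unfolding j_def by auto
  have "t * p / T \<le> p"
    using t T p by (simp add: divide_le_eq mult.commute mult_left_mono)
  then have "j \<le> 2^m"
    using j(1) unfolding p_def by (metis of_nat_le_iff of_nat_numeral of_nat_power order_trans)
  moreover have "dist (real j * T / p) t < d"
  proof -
    have "real j * T / p \<le> t"
      using j(1) T p by (simp add: field_simps)
    have "t * p < (real j + 1) * T"
      using j(2) T by (simp add: divide_less_eq)
    then have "(t * p - real j * T) / p < T / p"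
      using p by (intro divide_strict_right_mono) (auto simp: algebra_simps)
    then have "t - real j * T / p < T / p"
      using p by (simp add: diff_divide_distrib)
    then show ?thesis
      using \<open>real j * T / p \<le> t\<close>
      using p by (simp add: dist_real_def)
  qed
  ultimately show ?thesis
    using dd T p unfolding p_def by (intro exI[of _ m] exI[of _ j] conjI) auto
qed

lemma incseq_dyadic_grid:
  "incseq (\<lambda>m::nat. {\<omega>\<in>S. \<exists>j\<in>{..2^m}. P (real j * T / 2^m) \<omega>})"
proof (rule incseq_SucI)
  fix m :: nat
  have "\<exists>i\<in>{..2^Suc m}. P (real i * T / 2^Suc m) \<omega>" if "j \<in> {..2^m}" "P (real j * T / 2^m) \<omega>" for j \<omega>
    using that by (intro bexI[of _ "2 * j"]) auto
  then show "{\<omega>\<in>S. \<exists>j\<in>{..2^m}. P (real j * T / 2^m) \<omega>} \<subseteq> {\<omega>\<in>S. \<exists>j\<in>{..2^Suc m}. P (real j * T / 2^Suc m) \<omega>}"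
    by blast
qed

lemma std_BM_sup_tail:
  assumes BM: "std_BM M B" and T: "T > 0" and \<sigma>: "\<bar>\<sigma>\<bar> = 1" and x: "sqrt (2 * T) + 1 \<le> x"
  shows "\<exists>U\<in>sets M. {\<omega>\<in>space M. \<exists>t\<in>{0..T}. x \<le> \<sigma> * B t \<omega>} \<subseteq> U \<and>
           measure M U \<le> 2 * exp (- (x - 1 - sqrt (2 * T))\<^sup>2 / (2 * T))"
proof -
  interpret prob_space M
    using BM by (rule std_BM_prob_space)
  \<comment> \<open>the event itself need not be measurable; cover it by the increasing union of grid events\<close>
  define F where "F m = {\<omega>\<in>space M. \<exists>j\<in>{..2^m}. x - 1 \<le> \<sigma> * B (real j * T / 2^m) \<omega>}" for m :: nat
  have F_sets: "F m \<in> events" for m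
  proof -
    have "B (real j * T / 2^m) \<in> borel_measurable M" for j
      using T by (intro std_BM_measurable[OF BM]) simp
    then have "{\<omega>\<in>space M. x - 1 \<le> \<sigma> * B (real j * T / 2^m) \<omega>} \<in> events" for j
      by measurable
    then show ?thesis
      unfolding F_def by (intro sets.sets_Collect_finite_Ex) auto
  qed
  have "incseq F"
    unfolding F_def by (rule incseq_dyadic_grid)
  moreover have "prob (F m) \<le> 2 * exp (- (x - 1 - sqrt (2 * T))\<^sup>2 / (2 * T))" for m
    using std_BM_grid_max_tail[OF BM T \<sigma>, of "x - 1" "2^m"] x by (simp add: F_def Bex_def)
  ultimately have "prob (\<Union>m. F m) \<le> 2 * exp (- (x - 1 - sqrt (2 * T))\<^sup>2 / (2 * T))"
    using F_sets by (intro LIMSEQ_le_const2[OF finite_Lim_measure_incseq]) auto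
  moreover have "{\<omega>\<in>space M. \<exists>t\<in>{0..T}. x \<le> \<sigma> * B t \<omega>} \<subseteq> (\<Union>m. F m)"
  proof
    fix \<omega> assume "\<omega> \<in> {\<omega>\<in>space M. \<exists>t\<in>{0..T}. x \<le> \<sigma> * B t \<omega>}"
    then obtain t where \<omega>: "\<omega> \<in> space M" and t: "t \<in> {0..T}" and xt: "x \<le> \<sigma> * B t \<omega>"
      by auto
    obtain m j where j: "j \<le> 2^m" and near: "dist (B (real j * T / 2^m) \<omega>) (B t \<omega>) < 1"
      using continuous_on_dyadic_grid_approx[OF std_BM_continuous[OF BM \<omega>] T t zero_less_one] by blast
    have "\<bar>\<sigma> * B (real j * T / 2^m) \<omega> - \<sigma> * B t \<omega>\<bar> < 1"
      using near \<sigma> by (simp add: dist_real_def abs_mult right_diff_distrib[symmetric])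
    then have "x - 1 \<le> \<sigma> * B (real j * T / 2^m) \<omega>"
      using xt by linarith
    then show "\<omega> \<in> (\<Union>m. F m)"
      unfolding F_def using \<omega> j by auto
  qed
  ultimately show ?thesis
    using F_sets by blast
qed

lemma std_BM_drop_tail:
  assumes BM: "std_BM M B" and T: "T > 0" and G: "sqrt (2 * T) + 1 \<le> G / 2"
  shows "\<exists>U\<in>sets M. {\<omega>\<in>space M. \<exists>a\<in>{0..T}. \<exists>b\<in>{0..T}. B b \<omega> - B a \<omega> \<le> - G} \<subseteq> U \<and>
           measure M U \<le> 4 * exp (- (G / 2 - 1 - sqrt (2 * T))\<^sup>2 / (2 * T))"
proof -
  obtain U1 where U1: "U1 \<in> sets M" "{\<omega>\<in>space M. \<exists>t\<in>{0..T}. G / 2 \<le> 1 * B t \<omega>} \<subseteq> U1"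
    "measure M U1 \<le> 2 * exp (- (G / 2 - 1 - sqrt (2 * T))\<^sup>2 / (2 * T))"
    using std_BM_sup_tail[OF BM T _ G, of 1] by auto
  obtain U2 where U2: "U2 \<in> sets M" "{\<omega>\<in>space M. \<exists>t\<in>{0..T}. G / 2 \<le> -1 * B t \<omega>} \<subseteq> U2"
    "measure M U2 \<le> 2 * exp (- (G / 2 - 1 - sqrt (2 * T))\<^sup>2 / (2 * T))"
    using std_BM_sup_tail[OF BM T _ G, of "-1"] by auto
  \<comment> \<open>a drop by \<open>G\<close> forces \<open>B\<close> above \<open>G/2\<close> or below \<open>-G/2\<close>\<close>
  have "{\<omega>\<in>space M. \<exists>a\<in>{0..T}. \<exists>b\<in>{0..T}. B b \<omega> - B a \<omega> \<le> - G} \<subseteq> U1 \<union> U2"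
  proof
    fix \<omega> assume "\<omega> \<in> {\<omega>\<in>space M. \<exists>a\<in>{0..T}. \<exists>b\<in>{0..T}. B b \<omega> - B a \<omega> \<le> - G}"
    then obtain a b where \<omega>: "\<omega> \<in> space M" and ab: "a \<in> {0..T}" "b \<in> {0..T}"
      and drop: "B b \<omega> - B a \<omega> \<le> - G"
      by auto
    show "\<omega> \<in> U1 \<union> U2"
    proof (cases "G / 2 \<le> B a \<omega>")
      case True
      then have "\<omega> \<in> {\<omega>\<in>space M. \<exists>t\<in>{0..T}. G / 2 \<le> 1 * B t \<omega>}"
        using \<omega> ab by auto
      then show ?thesis
        using U1(2) by blast
    next
      case False
      then have "G / 2 \<le> -1 * B b \<omega>"
        using drop by linarith
      then have "\<omega> \<in> {\<omega>\<in>space M. \<exists>t\<in>{0..T}. G / 2 \<le> -1 * B t \<omega>}"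
        using \<omega> ab by auto
      then show ?thesis
        using U2(2) by blast
    qed
  qed
  moreover have "measure M (U1 \<union> U2) \<le> 4 * exp (- (G / 2 - 1 - sqrt (2 * T))\<^sup>2 / (2 * T))"
    using measure_Un_le[OF U1(1) U2(1)] U1(3) U2(3) by linarith
  ultimately show ?thesis
    using U1(1) U2(1) by blast
qed

section \<open>The principal Dirichlet eigenfunction\<close>

lemma dirichlet_eigen_ode:
  assumes W: "admissible_W W" and eig: "dirichlet_eigen W L lam v" and y: "1 < y" "y < L"
  shows "(v has_real_derivative deriv v y) (at y)"
    and "(deriv v has_real_derivative deriv (deriv v) y) (at y)"
    and "deriv (deriv v) y = 2 * lam * v y"
proof -
  have "v differentiable (at y)" "deriv v differentiable (at y)"
    and eq: "(1/2) * deriv (deriv v) y + (1/2) * W y * v y = lam * v y"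
    using eig y unfolding dirichlet_eigen_def by auto
  then show "(v has_real_derivative deriv v y) (at y)"
    and "(deriv v has_real_derivative deriv (deriv v) y) (at y)"
    by (simp_all add: DERIV_deriv_iff_real_differentiable)
  have "W y = 0"
    using W y unfolding admissible_W_def by auto
  then show "deriv (deriv v) y = 2 * lam * v y"
    using eq by simp
qed

lemma dirichlet_eigen_tendsto_right_end:
  assumes "dirichlet_eigen W L lam v" and "0 < L"
  shows "(v \<longlongrightarrow> 0) (at_left L)"
proof -
  have "continuous_on {0..L} v" "v L = 0"
    using assms(1) unfolding dirichlet_eigen_def by auto
  then show ?thesis
    using assms(2) unfolding continuous_on_def
    by (metis at_within_Icc_at_left atLeastAtMost_iff order_refl less_imp_le)
qed

text \<open>For \<open>lam \<ge> 0\<close> compare \<open>v\<close> with the solution \<open>sinh (k (L - y))\<close> of \<open>w'' = k\<^sup>2 w\<close>: their Wronskian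
  is nonincreasing on \<open>[x, L)\<close> and tends to a nonnegative limit at \<open>L\<close>.\<close>
lemma dirichlet_eigen_sinh_bound:
  assumes W: "admissible_W W" and eig: "dirichlet_eigen W L lam v"
    and v_pos: "\<forall>y\<in>{0<..<L}. v y > 0"
    and lam: "0 \<le> lam" "2 * lam \<le> k\<^sup>2" and k: "k > 0" and x: "1 < x" "x < L"
  shows "0 \<le> deriv v x * sinh (k * (L - x)) + k * cosh (k * (L - x)) * v x"
proof -
  define h where "h y = deriv v y * sinh (k * (L - y)) + k * cosh (k * (L - y)) * v y" for y
  have h_deriv: "(h has_real_derivative (2 * lam - k\<^sup>2) * v y * sinh (k * (L - y))) (at y)"
    if "1 < y" "y < L" for y
    using dirichlet_eigen_ode[OF W eig that] unfolding h_def
    by (auto intro!: derivative_eq_intros simp: algebra_simps power2_eq_square)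
  have h_le: "h y \<le> h x" if "x \<le> y" "y < L" for y
  proof (rule DERIV_nonpos_imp_nonincreasing[OF that(1)])
    fix z assume z: "x \<le> z" "z \<le> y"
    have "0 < v z"
      using v_pos z x that by auto
    then have "(2 * lam - k\<^sup>2) * v z * sinh (k * (L - z)) \<le> 0"
      using z that lam k by (intro mult_nonpos_nonneg) auto
    then show "\<exists>d. (h has_real_derivative d) (at z) \<and> d \<le> 0"
      using h_deriv[of z] z x that by auto
  qed
  have v'_mono: "deriv v x \<le> deriv v y" if "x \<le> y" "y < L" for y
  proof (rule DERIV_nonneg_imp_nondecreasing[OF that(1)])
    fix z assume z: "x \<le> z" "z \<le> y"
    have "0 < v z"
      using v_pos z x that by auto
    then have "0 \<le> 2 * lam * v z"
      using lam by simp
    then show "\<exists>d. (deriv v has_real_derivative d) (at z) \<and> d \<ge> 0"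
      using dirichlet_eigen_ode[OF W eig, of z] z x that by auto
  qed
  have "\<forall>\<^sub>F y in at_left L. deriv v x * sinh (k * (L - y)) + k * cosh (k * (L - y)) * v y \<le> h x"
    using eventually_at_left_real[OF x(2)]
  proof eventually_elim
    case (elim y)
    then have "deriv v x * sinh (k * (L - y)) \<le> deriv v y * sinh (k * (L - y))"
      using v'_mono k by (intro mult_right_mono) auto
    then show ?case
      using h_le[of y] elim unfolding h_def by auto
  qed
  moreover have "((\<lambda>y. deriv v x * sinh (k * (L - y)) + k * cosh (k * (L - y)) * v y) \<longlongrightarrow>
      deriv v x * sinh (k * (L - L)) + k * cosh (k * (L - L)) * 0) (at_left L)"
    using dirichlet_eigen_tendsto_right_end[OF eig] x by (intro tendsto_intros) auto
  ultimately have "0 \<le> h x"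
    by (intro tendsto_upperbound) auto
  then show ?thesis
    unfolding h_def .
qed

text \<open>For \<open>lam \<le> 0\<close> the eigenfunction is concave on \<open>(1, L)\<close> and vanishes at \<open>L\<close>.\<close>
lemma dirichlet_eigen_concave_bound:
  assumes W: "admissible_W W" and eig: "dirichlet_eigen W L lam v"
    and v_pos: "\<forall>y\<in>{0<..<L}. v y > 0" and lam: "lam \<le> 0" and x: "1 < x" "x < L"
  shows "0 \<le> deriv v x * (L - x) + v x"
proof -
  have v'_anti: "deriv v z \<le> deriv v x" if "x \<le> z" "z < L" for z
  proof (rule DERIV_nonpos_imp_nonincreasing[OF that(1)])
    fix w assume w: "x \<le> w" "w \<le> z"
    have "0 < v w"
      using v_pos w x that by auto
    then have "2 * lam * v w \<le> 0"
      using lam by (simp add: mult_nonpos_nonneg)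
    then show "\<exists>d. (deriv v has_real_derivative d) (at w) \<and> d \<le> 0"
      using dirichlet_eigen_ode[OF W eig, of w] w x that by auto
  qed
  have below_tangent: "\<forall>\<^sub>F y in at_left L. v y - v x \<le> deriv v x * (y - x)"
    using eventually_at_left_real[OF x(2)]
  proof eventually_elim
    case (elim y)
    then obtain z where z: "x < z" "z < y" "v y - v x = (y - x) * deriv v z"
      using MVT2[of x y v "deriv v"] dirichlet_eigen_ode(1)[OF W eig] x by force
    then have "(y - x) * deriv v z \<le> (y - x) * deriv v x"
      using v'_anti[of z] elim by (intro mult_left_mono) auto
    then show ?case
      using z(3) by (simp add: mult.commute)
  qed
  have "((\<lambda>y. v y - v x) \<longlongrightarrow> 0 - v x) (at_left L)"
    using dirichlet_eigen_tendsto_right_end[OF eig] x by (intro tendsto_intros) auto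
  moreover have "((\<lambda>y. deriv v x * (y - x)) \<longlongrightarrow> deriv v x * (L - x)) (at_left L)"
    by (intro tendsto_intros)
  ultimately have "0 - v x \<le> deriv v x * (L - x)"
    using below_tangent by (intro tendsto_le[of "at_left L"]) auto
  then show ?thesis
    by simp
qed

lemma dirichlet_eigen_log_deriv_lower:
  assumes W: "admissible_W W" and eig: "dirichlet_eigen W L lam v"
    and v_pos: "\<forall>y\<in>{0<..<L}. v y > 0" and lam: "2 * lam \<le> \<beta>\<^sup>2"
    and \<beta>: "\<beta> > 0" and \<theta>: "\<theta> > 0" and K: "1 / \<theta> \<le> tanh (\<beta> * K)" "1 \<le> \<beta> * \<theta> * K"
    and x: "1 < x" "x \<le> L - K"
  shows "- (\<beta> * \<theta>) \<le> deriv v x / v x"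
proof -
  have "0 < \<beta> * \<theta> * K"
    using K(2) by linarith
  then have "K > 0"
    using mult_pos_pos[OF \<beta> \<theta>] by (simp add: zero_less_mult_iff)
  define u where "u = L - x"
  have u: "K \<le> u" "0 < u" and "x < L"
    using x \<open>K > 0\<close> by (auto simp: u_def)
  have v: "v x > 0"
    using v_pos x \<open>x < L\<close> by auto
  have "- (\<beta> * \<theta>) * v x \<le> deriv v x"
  proof (cases "0 \<le> lam")
    case True
    have "1 / \<theta> \<le> tanh (\<beta> * u)"
      using K(1) u \<beta> by (simp add: order_trans)
    then have cosh_le: "cosh (\<beta> * u) \<le> \<theta> * sinh (\<beta> * u)"
      using \<theta> \<beta> u by (simp add: tanh_def field_simps)
    have "0 \<le> deriv v x * sinh (\<beta> * u) + \<beta> * cosh (\<beta> * u) * v x"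
      using dirichlet_eigen_sinh_bound[OF W eig v_pos True lam \<beta> x(1) \<open>x < L\<close>] by (simp add: u_def)
    also have "\<dots> \<le> deriv v x * sinh (\<beta> * u) + \<beta> * (\<theta> * sinh (\<beta> * u)) * v x"
      using cosh_le \<beta> v by (intro add_left_mono mult_right_mono mult_left_mono) auto
    finally have "0 \<le> (deriv v x + \<beta> * \<theta> * v x) * sinh (\<beta> * u)"
      by (simp add: algebra_simps)
    then show ?thesis
      using mult_pos_pos[OF \<beta> u(2)] by (simp add: zero_le_mult_iff)
  next
    case False
    have "v x \<le> \<beta> * \<theta> * u * v x"
      using K(2) u \<beta> \<theta> v by (simp add: order_trans mult_left_mono)
    moreover have "0 \<le> deriv v x * u + v x"
      using dirichlet_eigen_concave_bound[OF W eig v_pos _ x(1) \<open>x < L\<close>] False by (simp add: u_def)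
    ultimately have "0 \<le> (deriv v x + \<beta> * \<theta> * v x) * u"
      by (simp add: algebra_simps)
    then show ?thesis
      using u by (simp add: zero_le_mult_iff)
  qed
  then show ?thesis
    using v by (simp add: field_simps)
qed

lemma mono_on_le_tendsto_at_top:
  fixes f :: "real \<Rightarrow> real"
  assumes "mono_on {a<..} f" and "(f \<longlongrightarrow> l) at_top" and "a < x"
  shows "f x \<le> l"
proof (rule tendsto_lowerbound[OF assms(2)])
  show "\<forall>\<^sub>F y in at_top. f x \<le> f y"
    using eventually_ge_at_top[of x]
    by eventually_elim (use assms in \<open>auto intro: mono_onD\<close>)
qed simp

section \<open>Pathwise comparison\<close>

lemma continuous_on_first_hitting:
  fixes f :: "real \<Rightarrow> real"
  assumes f: "continuous_on {0..\<tau>} f" and "c < f 0" "0 \<le> \<tau>" "f \<tau> \<le> c"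
  shows "\<exists>s\<in>{0..\<tau>}. f s = c \<and> (\<forall>t\<in>{0..s}. c \<le> f t)"
proof -
  define S where "S = {t\<in>{0..\<tau>}. f t \<le> c}"
  have "closed S"
    unfolding S_def using f by (intro continuous_on_closed_Collect_le continuous_on_const) auto
  moreover have "S \<noteq> {}" "bdd_below S"
    using assms unfolding S_def by (auto intro: bdd_belowI[of _ 0])
  ultimately have "Inf S \<in> S"
    by (blast intro: closed_contains_Inf)
  define s where "s = Inf S"
  have s: "s \<in> {0..\<tau>}" "f s \<le> c"
    using \<open>Inf S \<in> S\<close> unfolding s_def S_def by auto
  have above: "c < f t" if "t \<in> {0..\<tau>}" "t < s" for t
    using cInf_lower[OF _ \<open>bdd_below S\<close>, of t] that unfolding s_def S_def by force
  have "f s = c"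
  proof (rule ccontr)
    assume "f s \<noteq> c"
    then obtain t where "0 \<le> t" "t \<le> s" "f t = c"
      using IVT2'[of f s c 0] s \<open>c < f 0\<close> continuous_on_subset[OF f, of "{0..s}"] by auto
    then show False
      using above[of t] s \<open>f s \<noteq> c\<close> by (cases "t = s") auto
  qed
  then show ?thesis
    using s above by (intro bexI[of _ s]) (auto simp: le_less)
qed

lemma continuous_on_last_exit:
  fixes f :: "real \<Rightarrow> real"
  assumes f: "continuous_on {0..s} f" and "0 \<le> s" "f s < l"
  shows "\<exists>a\<in>{0..s}. min l (f 0) \<le> f a \<and> (\<forall>t\<in>{a..s}. f t \<le> l)"
proof (cases "\<exists>t\<in>{0..s}. l \<le> f t")
  case False
  then show ?thesis
    using \<open>0 \<le> s\<close> by (intro bexI[of _ 0]) auto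
next
  case True
  define S where "S = {t\<in>{0..s}. l \<le> f t}"
  have "closed S"
    unfolding S_def using f by (intro continuous_on_closed_Collect_le continuous_on_const) auto
  moreover have "S \<noteq> {}" "bdd_above S"
    using True unfolding S_def by (auto intro: bdd_aboveI[of _ s])
  ultimately have "Sup S \<in> S"
    by (blast intro: closed_contains_Sup)
  define a where "a = Sup S"
  have a: "a \<in> {0..s}" "l \<le> f a"
    using \<open>Sup S \<in> S\<close> unfolding a_def S_def by auto
  have below: "f t < l" if "t \<in> {0..s}" "a < t" for t
    using cSup_upper[OF _ \<open>bdd_above S\<close>, of t] that unfolding a_def S_def by force
  have "f a = l"
  proof (rule ccontr)
    assume "f a \<noteq> l"
    then obtain t where "a \<le> t" "t \<le> s" "f t = l"
      using IVT2'[of f s l a] a \<open>f s < l\<close> continuous_on_subset[OF f, of "{a..s}"] by auto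
    then show False
      using below[of t] a \<open>f a \<noteq> l\<close> by (cases "t = a") auto
  qed
  then show ?thesis
    using a below by (intro bexI[of _ a]) (auto simp: le_less)
qed

text \<open>If \<open>\<zeta> = y + \<integral> b(\<zeta>) + w\<close> falls from above \<open>l\<close> to \<open>c\<close> while the drift \<open>b\<close> is \<open>\<ge> -m\<close> on \<open>[c, l]\<close>,
  then on the last crossing from \<open>l\<close> to \<open>c\<close> the noise \<open>w\<close> must have dropped by nearly \<open>l - c\<close>.\<close>
lemma integral_equation_hitting_drop:
  fixes \<zeta> w b :: "real \<Rightarrow> real"
  assumes cont: "continuous_on {0..} \<zeta>"
    and eq: "\<And>t. 0 \<le> t \<Longrightarrow>
      (\<lambda>s. b (\<zeta> s)) integrable_on {0..t} \<and> \<zeta> t = y + integral {0..t} (\<lambda>s. b (\<zeta> s)) + w t"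
    and drift: "\<And>x. c \<le> x \<Longrightarrow> x \<le> l \<Longrightarrow> - m \<le> b x" and "0 \<le> m"
    and "c < \<zeta> 0" "c < l" and \<tau>: "0 \<le> \<tau>" "\<tau> \<le> \<epsilon>" "\<zeta> \<tau> \<le> c"
  shows "\<exists>a\<in>{0..\<epsilon>}. \<exists>s\<in>{0..\<epsilon>}. w s - w a \<le> c - min l (\<zeta> 0) + m * \<epsilon>"
proof -
  have cont_on: "continuous_on {0..t} \<zeta>" for t
    by (rule continuous_on_subset[OF cont]) auto
  obtain s where s: "s \<in> {0..\<tau>}" "\<zeta> s = c" "\<forall>t\<in>{0..s}. c \<le> \<zeta> t"
    using continuous_on_first_hitting[OF cont_on \<open>c < \<zeta> 0\<close> \<tau>(1,3)] by blast
  obtain a where a: "a \<in> {0..s}" "min l (\<zeta> 0) \<le> \<zeta> a" "\<forall>t\<in>{a..s}. \<zeta> t \<le> l"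
    using continuous_on_last_exit[OF cont_on, of s l] s \<open>c < l\<close> by auto
  have int_s: "(\<lambda>t. b (\<zeta> t)) integrable_on {0..s}"
    using eq[of s] s by auto
  then have int_as: "(\<lambda>t. b (\<zeta> t)) integrable_on {a..s}"
    using a by (auto intro: integrable_on_subinterval)
  have "- m * (s - a) = integral {a..s} (\<lambda>t. - m)"
    using a by simp
  also have "\<dots> \<le> integral {a..s} (\<lambda>t. b (\<zeta> t))"
    using a s by (intro integral_le[OF integrable_const_ivl int_as] drift) auto
  finally have int_lower: "- m * (s - a) \<le> integral {a..s} (\<lambda>t. b (\<zeta> t))" .
  have "integral {0..a} (\<lambda>t. b (\<zeta> t)) + integral {a..s} (\<lambda>t. b (\<zeta> t)) = integral {0..s} (\<lambda>t. b (\<zeta> t))"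
    using a by (intro Henstock_Kurzweil_Integration.integral_combine int_s) auto
  then have "w s - w a = \<zeta> s - \<zeta> a - integral {a..s} (\<lambda>t. b (\<zeta> t))"
    using eq[of s] eq[of a] a s by simp
  also have "\<dots> \<le> c - min l (\<zeta> 0) + m * (s - a)"
    using s a int_lower by simp
  also have "m * (s - a) \<le> m * \<epsilon>"
    using \<open>0 \<le> m\<close> a s \<tau> by (intro mult_left_mono) auto
  finally show ?thesis
    using a s \<tau> by (intro bexI[of _ a] bexI[of _ s]) auto
qed

lemma diffusion_solution_hitting_drop:
  fixes v :: "real \<Rightarrow> real"
  assumes W: "admissible_W W" and eig: "dirichlet_eigen W L lam v"
    and v_pos: "\<forall>y\<in>{0<..<L}. v y > 0" and lam: "2 * lam \<le> \<beta>\<^sup>2"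
    and \<beta>: "\<beta> > 0" and \<theta>: "\<theta> > 0" and K: "1 / \<theta> \<le> tanh (\<beta> * K)" "1 \<le> \<beta> * \<theta> * K"
    and ds: "diffusion_solution M B (\<lambda>y. deriv v y / v y) L (L - z) \<zeta>"
    and "2 < L - z" "2 < L - K" and \<omega>: "\<omega> \<in> space M" and "0 < \<epsilon>"
    and low: "(INF t\<in>{0..\<epsilon>}. \<zeta> t \<omega>) \<le> 1"
  shows "\<exists>a\<in>{0..\<epsilon>}. \<exists>s\<in>{0..\<epsilon>}. B s \<omega> - B a \<omega> \<le> 2 - min (L - K) (L - z) + \<beta> * \<theta> * \<epsilon>"
proof -
  have BM: "std_BM M B"
    using ds unfolding diffusion_solution_def by blast
  have cont: "continuous_on {0..} (\<lambda>t. \<zeta> t \<omega>)"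
    and eq: "\<And>t. 0 \<le> t \<Longrightarrow> (\<lambda>s. deriv v (\<zeta> s \<omega>) / v (\<zeta> s \<omega>)) integrable_on {0..t} \<and>
      \<zeta> t \<omega> = (L - z) + integral {0..t} (\<lambda>s. deriv v (\<zeta> s \<omega>) / v (\<zeta> s \<omega>)) + B t \<omega>"
    using ds \<omega> unfolding diffusion_solution_def by blast+
  have "\<zeta> 0 \<omega> = L - z"
    using eq[of 0] std_BM_zero[OF BM \<omega>] by simp
  obtain \<tau> where \<tau>: "\<tau> \<in> {0..\<epsilon>}" "\<And>t. t \<in> {0..\<epsilon>} \<Longrightarrow> \<zeta> \<tau> \<omega> \<le> \<zeta> t \<omega>"
  proof -
    have "continuous_on {0..\<epsilon>} (\<lambda>t. \<zeta> t \<omega>)"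
      by (rule continuous_on_subset[OF cont]) auto
    moreover have "{0..\<epsilon>} \<noteq> {}"
      using \<open>0 < \<epsilon>\<close> by simp
    ultimately show ?thesis
      using continuous_attains_inf[OF compact_Icc] that by blast
  qed
  then have "\<zeta> \<tau> \<omega> \<le> (INF t\<in>{0..\<epsilon>}. \<zeta> t \<omega>)"
    using \<open>0 < \<epsilon>\<close> by (intro cINF_greatest) auto
  then have "\<zeta> \<tau> \<omega> \<le> 2"
    using low by simp
  have drift: "- (\<beta> * \<theta>) \<le> deriv v x / v x" if "2 \<le> x" "x \<le> L - K" for x
    using that by (intro dirichlet_eigen_log_deriv_lower[OF W eig v_pos lam \<beta> \<theta> K]) auto
  have "\<exists>a\<in>{0..\<epsilon>}. \<exists>s\<in>{0..\<epsilon>}. B s \<omega> - B a \<omega> \<le> 2 - min (L - K) (\<zeta> 0 \<omega>) + \<beta> * \<theta> * \<epsilon>"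
    using \<beta> \<theta> \<tau>(1) \<open>\<zeta> 0 \<omega> = L - z\<close> \<open>2 < L - z\<close> \<open>2 < L - K\<close> \<open>\<zeta> \<tau> \<omega> \<le> 2\<close>
    by (intro integral_equation_hitting_drop[OF cont eq drift]) auto
  then show ?thesis
    using \<open>\<zeta> 0 \<omega> = L - z\<close> by simp
qed

section \<open>The hitting estimate\<close>

lemma sqrt_two_mult_le_amgm:
  fixes g q L :: real
  assumes "g > 0" "q > 0" "L > 0"
  shows "sqrt (2 * (q * L)) \<le> g * L / 8 + 4 * q / g"
proof -
  have "(g * L / 8 + 4 * q / g)\<^sup>2 - 2 * (q * L) = (g * L / 8 - 4 * q / g)\<^sup>2"
    using assms by (simp add: power2_eq_square field_simps)
  then have "2 * (q * L) \<le> (g * L / 8 + 4 * q / g)\<^sup>2"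
    by (metis diff_ge_0_iff_ge zero_le_power2)
  then show ?thesis
    using assms by (simp add: real_le_lsqrt)
qed

lemma diffusion_solution_low_subset_drop:
  fixes v :: "real \<Rightarrow> real"
  assumes W: "admissible_W W" and eig: "dirichlet_eigen W L lam v"
    and v_pos: "\<forall>y\<in>{0<..<L}. v y > 0" and lam: "2 * lam \<le> \<beta>\<^sup>2"
    and \<beta>: "\<beta> > 0" and \<theta>: "\<theta> > 0" and K: "1 / \<theta> \<le> tanh (\<beta> * K)" "1 \<le> \<beta> * \<theta> * K" "0 < K"
    and "0 < \<epsilon>" and L: "2 < L - K" "2 < (1 - c) * L" and z: "z \<in> {0..c * L}"
    and ds: "diffusion_solution M B (\<lambda>y. deriv v y / v y) L (L - z) \<zeta>"
  shows "{\<omega>\<in>space M. (INF t\<in>{0..\<epsilon>}. \<zeta> t \<omega>) \<le> 1}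
    \<subseteq> {\<omega>\<in>space M. \<exists>a\<in>{0..\<epsilon>}. \<exists>s\<in>{0..\<epsilon>}. B s \<omega> - B a \<omega> \<le> 2 - ((1 - c) * L - K) + \<beta> * \<theta> * \<epsilon>}"
proof safe
  fix \<omega> assume \<omega>: "\<omega> \<in> space M" and low: "(INF t\<in>{0..\<epsilon>}. \<zeta> t \<omega>) \<le> 1"
  have "2 < L - z"
    using z L(2) by (simp add: algebra_simps)
  then obtain a s where "a \<in> {0..\<epsilon>}" "s \<in> {0..\<epsilon>}"
    and drop: "B s \<omega> - B a \<omega> \<le> 2 - min (L - K) (L - z) + \<beta> * \<theta> * \<epsilon>"
    using diffusion_solution_hitting_drop[OF W eig v_pos lam \<beta> \<theta> K(1,2) ds _ L(1) \<omega> \<open>0 < \<epsilon>\<close> low]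
    by blast
  moreover have "(1 - c) * L - K \<le> min (L - K) (L - z)"
    using z \<open>0 < K\<close> by (auto simp: algebra_simps)
  ultimately show "\<exists>a\<in>{0..\<epsilon>}. \<exists>s\<in>{0..\<epsilon>}. B s \<omega> - B a \<omega> \<le> 2 - ((1 - c) * L - K) + \<beta> * \<theta> * \<epsilon>"
    by (intro bexI[of _ a] bexI[of _ s]) auto
qed

lemma diffusion_solution_hitting_prob_le:
  fixes v :: "real \<Rightarrow> real" and M :: "'a measure"
  assumes W: "admissible_W W" and eig: "dirichlet_eigen W L lam v"
    and v_pos: "\<forall>y\<in>{0<..<L}. v y > 0" and lam: "2 * lam \<le> \<beta>\<^sup>2"
    and \<beta>: "\<beta> > 0" and \<theta>: "\<theta> > 0" and K: "1 / \<theta> \<le> tanh (\<beta> * K)" "1 \<le> \<beta> * \<theta> * K"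
    and q: "q > 0" and g: "g = (1 - c) - \<beta> * \<theta> * q" "g > 0"
    and L: "2 < L - K" "2 < (1 - c) * L" "2 + K / 2 + 4 * q / g \<le> g * L / 8"
    and z: "z \<in> {0..c * L}"
    and ds: "diffusion_solution M B (\<lambda>y. deriv v y / v y) L (L - z) \<zeta>"
  shows "measure M {\<omega>\<in>space M. (INF t\<in>{0..q * L}. \<zeta> t \<omega>) \<le> 1} \<le> 4 * exp (- (g\<^sup>2 / (32 * q)) * L)"
proof -
  have BM: "std_BM M B"
    using ds unfolding diffusion_solution_def by blast
  interpret prob_space M
    using BM by (rule std_BM_prob_space)
  have "0 < \<beta> * \<theta> * K"
    using K(2) by linarith
  then have "K > 0"
    using mult_pos_pos[OF \<beta> \<theta>] by (simp add: zero_less_mult_iff)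
  then have "L > 0"
    using L(1) by simp
  define \<epsilon> where "\<epsilon> = q * L"
  define G where "G = g * L - 2 - K"
  have \<epsilon>: "\<epsilon> > 0"
    using q \<open>L > 0\<close> by (simp add: \<epsilon>_def)
  have "sqrt (2 * \<epsilon>) \<le> g * L / 8 + 4 * q / g"
    unfolding \<epsilon>_def by (rule sqrt_two_mult_le_amgm[OF g(2) q \<open>L > 0\<close>])
  then have margin: "g * L / 4 \<le> G / 2 - 1 - sqrt (2 * \<epsilon>)"
    using L(3) unfolding G_def by argo
  moreover have "0 < g * L / 4"
    using g(2) \<open>L > 0\<close> by simp
  ultimately obtain U where U: "U \<in> sets M"
    "{\<omega>\<in>space M. \<exists>a\<in>{0..\<epsilon>}. \<exists>b\<in>{0..\<epsilon>}. B b \<omega> - B a \<omega> \<le> - G} \<subseteq> U"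
    "measure M U \<le> 4 * exp (- (G / 2 - 1 - sqrt (2 * \<epsilon>))\<^sup>2 / (2 * \<epsilon>))"
    using std_BM_drop_tail[OF BM \<epsilon>, of G] by auto
  have "- G = 2 - ((1 - c) * L - K) + \<beta> * \<theta> * \<epsilon>"
    by (simp add: G_def g(1) \<epsilon>_def algebra_simps)
  then have "{\<omega>\<in>space M. (INF t\<in>{0..q * L}. \<zeta> t \<omega>) \<le> 1} \<subseteq> U"
    using diffusion_solution_low_subset_drop[OF W eig v_pos lam \<beta> \<theta> K \<open>K > 0\<close> \<epsilon> L(1,2) z ds] U(2)
    by (simp add: \<epsilon>_def)
  then have "measure M {\<omega>\<in>space M. (INF t\<in>{0..q * L}. \<zeta> t \<omega>) \<le> 1} \<le> measure M U"
    by (rule finite_measure_mono[OF _ U(1)])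
  also have "\<dots> \<le> 4 * exp (- (G / 2 - 1 - sqrt (2 * \<epsilon>))\<^sup>2 / (2 * \<epsilon>))"
    by (rule U(3))
  also have "\<dots> \<le> 4 * exp (- ((g * L / 4)\<^sup>2 / (2 * \<epsilon>)))"
    using margin \<open>0 < g * L / 4\<close> \<epsilon> by (simp add: power_mono frac_le)
  also have "(g * L / 4)\<^sup>2 / (2 * \<epsilon>) = g\<^sup>2 / (32 * q) * L"
    using q \<open>L > 0\<close> by (simp add: \<epsilon>_def power2_eq_square field_simps)
  finally show ?thesis
    by simp
qed

lemma diffusion_solution_hitting_prob_exp_decay:
  fixes lam1 :: "real \<Rightarrow> real" and v1 :: "real \<Rightarrow> real \<Rightarrow> real"
  assumes W: "admissible_W W"
    and eig: "\<forall>L>1. dirichlet_eigen W L (lam1 L) (v1 L)"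
    and v_pos: "\<forall>L>1. \<forall>x\<in>{0<..<L}. v1 L x > 0"
    and lam: "\<forall>L>1. 2 * lam1 L \<le> \<beta>\<^sup>2"
    and \<beta>: "\<beta> > 0" and q: "q > 0" and c: "\<beta> * q < 1 - c"
  shows "\<exists>\<kappa>>0. \<exists>L0. \<forall>L\<ge>L0. \<forall>z\<in>{0..c * L}. \<forall>(M :: 'a measure) B \<zeta>.
      diffusion_solution M B (\<lambda>y. deriv (v1 L) y / v1 L y) L (L - z) \<zeta> \<longrightarrow>
      measure M {\<omega>\<in>space M. (INF t\<in>{0..q * L}. \<zeta> t \<omega>) \<le> 1} \<le> 4 * exp (- \<kappa> * L)"
proof -
  define p where "p = \<beta> * q"
  \<comment> \<open>\<open>\<beta> \<theta> q\<close> lies halfway between \<open>\<beta> q\<close> and \<open>1 - c\<close>\<close>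
  define \<theta> where "\<theta> = (1 + (1 - c) / p) / 2"
  define g where "g = (1 - c) - \<beta> * \<theta> * q"
  have "p > 0" "p < 1 - c"
    using \<beta> q c by (simp_all add: p_def)
  then have \<theta>: "\<theta> > 1" and "p * \<theta> = (p + (1 - c)) / 2"
    by (simp_all add: \<theta>_def field_simps)
  then have g: "g > 0"
    using \<open>p < 1 - c\<close> by (simp add: g_def p_def ac_simps)
  have "\<forall>\<^sub>F K in at_top. 1 / \<theta> \<le> tanh (\<beta> * K) \<and> 1 \<le> \<beta> * \<theta> * K"
    using \<theta> \<beta> by (intro eventually_conj; real_asymp)
  then obtain K where K: "1 / \<theta> \<le> tanh (\<beta> * K)" "1 \<le> \<beta> * \<theta> * K"
    by (auto simp: eventually_at_top_linorder)
  have "\<forall>\<^sub>F L in at_top. 1 < L \<and> 2 < L - K \<and> 2 < (1 - c) * L \<and> 2 + K / 2 + 4 * q / g \<le> g * L / 8"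
    using \<open>p < 1 - c\<close> \<open>p > 0\<close> g by (intro eventually_conj; real_asymp)
  then obtain L0 where L0: "\<And>L. L \<ge> L0 \<Longrightarrow>
      1 < L \<and> 2 < L - K \<and> 2 < (1 - c) * L \<and> 2 + K / 2 + 4 * q / g \<le> g * L / 8"
    by (auto simp: eventually_at_top_linorder)
  have "\<forall>L\<ge>L0. \<forall>z\<in>{0..c * L}. \<forall>(M :: 'a measure) B \<zeta>.
      diffusion_solution M B (\<lambda>y. deriv (v1 L) y / v1 L y) L (L - z) \<zeta> \<longrightarrow>
      measure M {\<omega>\<in>space M. (INF t\<in>{0..q * L}. \<zeta> t \<omega>) \<le> 1} \<le> 4 * exp (- (g\<^sup>2 / (32 * q)) * L)"
  proof (intro allI impI ballI)
    fix L z and M :: "'a measure" and B \<zeta>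
    assume "L0 \<le> L" and z: "z \<in> {0..c * L}"
      and ds: "diffusion_solution M B (\<lambda>y. deriv (v1 L) y / v1 L y) L (L - z) \<zeta>"
    have "0 < \<theta>"
      using \<theta> by simp
    then show "measure M {\<omega>\<in>space M. (INF t\<in>{0..q * L}. \<zeta> t \<omega>) \<le> 1} \<le> 4 * exp (- (g\<^sup>2 / (32 * q)) * L)"
      using L0[OF \<open>L0 \<le> L\<close>] eig v_pos lam
      by (intro diffusion_solution_hitting_prob_le[OF W _ _ _ \<beta> _ K q g_def g _ _ _ z ds]) auto
  qed
  moreover have "0 < g\<^sup>2 / (32 * q)"
    using g q by simp
  ultimately show ?thesis
    by blast
qed

lemma eventually_exp_le_powr:
  fixes \<kappa> b L0 :: real
  assumes "\<kappa> > 0" "b > 0"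
  shows "\<forall>\<^sub>F N in sequentially. \<forall>L. ln (real N) / b \<le> L \<longrightarrow>
    L0 \<le> L \<and> exp (- \<kappa> * L) \<le> real N powr (- (\<kappa> / b))"
proof -
  have "\<forall>\<^sub>F N in sequentially. L0 \<le> ln (real N) / b \<and> 0 < real N"
    using \<open>b > 0\<close> by (intro eventually_conj; real_asymp)
  then show ?thesis
  proof eventually_elim
    case (elim N)
    show ?case
    proof (intro allI impI conjI)
      fix L assume L: "ln (real N) / b \<le> L"
      then show "L0 \<le> L"
        using elim by linarith
      have "\<kappa> * (ln (real N) / b) \<le> \<kappa> * L"
        using L \<open>\<kappa> > 0\<close> by (intro mult_left_mono) auto
      then show "exp (- \<kappa> * L) \<le> real N powr (- (\<kappa> / b))"
        using elim by (simp add: powr_def)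
    qed
  qed
qed

theorem mainTheorem12:
  fixes W :: "real \<Rightarrow> real"
    and lam1 :: "real \<Rightarrow> real" and v1 :: "real \<Rightarrow> real \<Rightarrow> real"
    and lam_inf \<beta> \<mu> \<delta>1 \<delta>2 c :: real
  assumes W: "admissible_W W"
    and lam1_eig: "\<forall>L>1. dirichlet_eigen W L (lam1 L) (v1 L)"
    and lam1_largest: "\<forall>L>1. \<forall>lam v. dirichlet_eigen W L lam v \<longrightarrow> lam \<le> lam1 L"
    and v1_pos: "\<forall>L>1. \<forall>x\<in>{0<..<L}. v1 L x > 0"
    and lam1_mono: "mono_on {1<..} lam1"
    and lam1_lim: "(lam1 \<longlongrightarrow> lam_inf) at_top"
    and lam_inf_pos: "lam_inf > 0"
    and beta_def: "\<beta> = sqrt (2 * lam_inf)"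
    and mu_def: "\<mu> = sqrt (1 + 2 * lam_inf)"
    and mu_beta: "\<mu> > 3 * \<beta>"
    and delta: "\<delta>1 > 0" "\<delta>2 > 0" "(1 - \<delta>1) / \<beta> = 2 * (1 + \<delta>2) / (\<mu> - \<beta>)"
    and c: "c < \<delta>1"
  shows "\<exists>\<Delta>1>0. \<forall>A::real. A \<ge> 1 \<longrightarrow> (\<exists>c2>0. \<exists>N0::nat. \<forall>N::nat. N \<ge> N0 \<longrightarrow>
     (let L = ln (real N) / (2 * \<beta>) + ln A / (\<mu> - \<beta>);
          \<epsilon> = (1 - \<delta>1) / \<beta> * L
      in \<forall>z\<in>{0..c * L}. \<forall>(M :: 'a measure) B \<zeta>.
           diffusion_solution M B (\<lambda>y. deriv (v1 L) y / v1 L y) L (L - z) \<zeta> \<longrightarrow>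
           measure M {\<omega>\<in>space M. (INF t\<in>{0..\<epsilon>}. \<zeta> t \<omega>) \<le> 1} \<le> c2 * real N powr (- \<Delta>1)))"
proof -
  have \<beta>: "\<beta> > 0" and \<beta>_sq: "\<beta>\<^sup>2 = 2 * lam_inf"
    using lam_inf_pos beta_def by simp_all
  have "0 < (1 - \<delta>1) / \<beta>"
    unfolding delta(3) using delta(2) mu_beta \<beta> by simp
  define q where "q = (1 - \<delta>1) / \<beta>"
  have q: "q > 0" and "\<beta> * q < 1 - c"
    using \<open>0 < (1 - \<delta>1) / \<beta>\<close> \<beta> c by (simp_all add: q_def)
  have "\<forall>L>1. 2 * lam1 L \<le> \<beta>\<^sup>2"
    using mono_on_le_tendsto_at_top[OF lam1_mono lam1_lim] \<beta>_sq by simp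
  then obtain \<kappa> L0 where "\<kappa> > 0" and decay: "\<forall>L\<ge>L0. \<forall>z\<in>{0..c * L}. \<forall>(M :: 'a measure) B \<zeta>.
      diffusion_solution M B (\<lambda>y. deriv (v1 L) y / v1 L y) L (L - z) \<zeta> \<longrightarrow>
      measure M {\<omega>\<in>space M. (INF t\<in>{0..q * L}. \<zeta> t \<omega>) \<le> 1} \<le> 4 * exp (- \<kappa> * L)"
    using diffusion_solution_hitting_prob_exp_decay[OF W lam1_eig v1_pos _ \<beta> q \<open>\<beta> * q < 1 - c\<close>]
    by blast
  obtain N0 where N0: "\<And>N L. N0 \<le> N \<Longrightarrow> ln (real N) / (2 * \<beta>) \<le> L \<Longrightarrow>
      L0 \<le> L \<and> exp (- \<kappa> * L) \<le> real N powr (- (\<kappa> / (2 * \<beta>)))"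
    using eventually_exp_le_powr[OF \<open>\<kappa> > 0\<close>, of "2 * \<beta>" L0] \<beta>
    by (auto simp: eventually_sequentially)
  show ?thesis
  proof (rule exI[of _ "\<kappa> / (2 * \<beta>)"], intro conjI[rotated] allI impI, rule exI[of _ 4],
      intro conjI[rotated] exI[of _ N0] allI impI, unfold Let_def, intro ballI allI impI)
    fix A :: real and N :: nat and z and M :: "'a measure" and B \<zeta>
    let ?L = "ln (real N) / (2 * \<beta>) + ln A / (\<mu> - \<beta>)"
    assume "1 \<le> A" "N0 \<le> N" and z: "z \<in> {0..c * ?L}"
      and ds: "diffusion_solution M B (\<lambda>y. deriv (v1 ?L) y / v1 ?L y) ?L (?L - z) \<zeta>"
    have "ln (real N) / (2 * \<beta>) \<le> ?L"
      using \<open>1 \<le> A\<close> mu_beta \<beta> by simp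
    with N0[OF \<open>N0 \<le> N\<close>] have "L0 \<le> ?L" "4 * exp (- \<kappa> * ?L) \<le> 4 * real N powr (- (\<kappa> / (2 * \<beta>)))"
      by auto
    with decay z ds show "measure M {\<omega>\<in>space M. (INF t\<in>{0..(1 - \<delta>1) / \<beta> * ?L}. \<zeta> t \<omega>) \<le> 1}
        \<le> 4 * real N powr (- (\<kappa> / (2 * \<beta>)))"
      unfolding q_def by (meson order_trans)
  qed (use \<open>\<kappa> > 0\<close> \<beta> in auto)
qed

end
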